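(* Let $X_n\subset\mathbb{R}^2$ ($n\in\mathbb{N}$) be closed sets converging in the Painlevé–Kuratowski sense to a nonempty set $X\subset\mathbb{R}^2$. Then the Clarke subdifferentials $\partial\,\mathrm{dist}^2_{X_n}$ tend graphically to $\partial\,\mathrm{dist}^2_X$.
   Context: For a nonempty set $A\subset\mathbb{R}^p$, $\mathrm{dist}_A(a)=\inf\{|x-a|:x\in A\}$ (Euclidean norm) and $\mathrm{dist}^2_A=(\mathrm{dist}_A)^2$, a locally Lipschitz function. For a locally Lipschitz $g\colon\mathbb{R}^p\to\mathbb{R}$ the Clarke subdifferential is $\partial g(x):=\mathrm{conv}\{\lim_{\nu} g'(x_\nu)\mid x_\nu\notin Z,\ x_\nu\to x,\ (g'(x_\nu))_\nu\text{ convergent}\}$, $Z$ being a null set containing the non-differentiability points of $g$. For subsets $A_n$ of a metric space $M$, $\liminf A_n$ is the set of limits of sequences $x_n\in A_n$, $\limsup A_n$ is the set of limits of sequences $x_{n_k}\in A_{n_k}$ along some $n_1<n_2<\dots$, and $A_n\to A$ in the Painlevé–Kuratowski sense if both equal $A$. A sequence of multifunctions $F_n\colon\mathbb{R}^2\rightrightarrows Y$ tends graphically to $F$ if the graphs $\Gamma_{F_n}=\{(x,y):y\in F_n(x)\}$ converge to $\Gamma_F$ in the Painlevé–Kuratowski sense. *)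

theory Defs
  imports "HOL-Analysis.Analysis"
begin

text \<open>The exceptional null set Z
is taken to be exactly the set of points where g is not differentiable; the gradient
g'(y) at a differentiability point y is the vector v with derivative (\<lambda>h. v \<bullet> h).\<close>
definition clarke_subdiff :: "(real^2 \<Rightarrow> real) \<Rightarrow> real^2 \<Rightarrow> (real^2) set" where
  "clarke_subdiff g x = convex hull
     {v. \<exists>xs vs. (\<forall>\<nu>. (g has_derivative (\<lambda>h. vs \<nu> \<bullet> h)) (at (xs \<nu>)))
                 \<and> xs \<longlonglongrightarrow> x \<and> vs \<longlonglongrightarrow> v}"

definition PK_liminf :: "(nat \<Rightarrow> 'a::metric_space set) \<Rightarrow> 'a set" where
  "PK_liminf A = {x. \<exists>xs. (\<forall>n. xs n \<in> A n) \<and> xs \<longlonglongrightarrow> x}"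

definition PK_limsup :: "(nat \<Rightarrow> 'a::metric_space set) \<Rightarrow> 'a set" where
  "PK_limsup A = {x. \<exists>r xs. strict_mono r \<and> (\<forall>k. xs k \<in> A (r k)) \<and> xs \<longlonglongrightarrow> x}"

definition PK_converges :: "(nat \<Rightarrow> 'a::metric_space set) \<Rightarrow> 'a set \<Rightarrow> bool" where
  "PK_converges A L \<longleftrightarrow> PK_liminf A = L \<and> PK_limsup A = L"

definition graph_of :: "('a \<Rightarrow> 'b set) \<Rightarrow> ('a \<times> 'b) set" where
  "graph_of F = {(x, y). y \<in> F x}"

definition graph_converges ::
  "(nat \<Rightarrow> 'a::metric_space \<Rightarrow> 'b::metric_space set) \<Rightarrow> ('a \<Rightarrow> 'b set) \<Rightarrow> bool" where
  "graph_converges Fs F \<longleftrightarrow> PK_converges (\<lambda>n. graph_of (Fs n)) (graph_of F)"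

end

theory Submission
  imports Defs
begin

(* The Asplund function psi_A(x) = (|x|^2 - d_A(x)^2) / 2 is the supremum over a in A of the
   affine functions x.a - |a|^2/2, hence convex, and its subdifferential at x is the convex hull
   of the set P_A(x) of nearest points of A.  At a point y where d_A^2 is differentiable its
   gradient is 2 (y - a) for any a in P_A(y), and d_A^2 is differentiable on the open segments
   from x to its nearest points; hence the Clarke subdifferential of d_A^2 at x is
   2 (x - conv P_A(x)), i.e. the image of the subdifferential of psi_A under the linear
   homeomorphism (x, c) -> (x, 2 (x - c)) of graphs.
   Painleve-Kuratowski convergence of closed sets gives continuous convergence of the distance
   functions, hence of the convex functions psi_{X_n} to psi_X.  For such sequences the graphs
   of the subdifferentials converge (Attouch): subgradient inequalities pass to the limit, and a
   point (p, c) of the limit graph is approximated by the minimizers m_n of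
   psi_{X_n}(y) - c.y + |y - p|^2/2, for which c - (m_n - p) is a subgradient at m_n. *)

section \<open>Nearest points\<close>

definition nearest_points :: "'a::metric_space set \<Rightarrow> 'a \<Rightarrow> 'a set" where
  "nearest_points A x = {a \<in> A. dist x a = infdist x A}"

lemma nearest_points_subset: "nearest_points A x \<subseteq> A"
  unfolding nearest_points_def by auto

lemma nearest_pointsI:
  assumes "a \<in> A" "\<And>b. b \<in> A \<Longrightarrow> dist x a \<le> dist x b"
  shows "a \<in> nearest_points A x"
proof -
  have "A \<noteq> {}" using assms(1) by blast
  have "dist x a \<le> (INF b\<in>A. dist x b)"
    by (rule cINF_greatest) (use assms \<open>A \<noteq> {}\<close> in auto)
  then have "dist x a \<le> infdist x A"
    by (simp add: infdist_notempty[OF \<open>A \<noteq> {}\<close>])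
  with infdist_le[OF assms(1), of x] assms(1) show ?thesis
    unfolding nearest_points_def by simp
qed

lemma nearest_points_nonempty:
  fixes A :: "'a::heine_borel set"
  assumes "closed A" "A \<noteq> {}"
  shows "nearest_points A x \<noteq> {}"
proof -
  obtain a where "a \<in> A" "\<And>b. b \<in> A \<Longrightarrow> dist x a \<le> dist x b"
    using distance_attains_inf[OF assms] by metis
  then have "a \<in> nearest_points A x" by (rule nearest_pointsI)
  then show ?thesis by blast
qed

lemma compact_nearest_points:
  fixes A :: "'a::heine_borel set"
  assumes "closed A"
  shows "compact (nearest_points A x)"
proof -
  have "nearest_points A x = A \<inter> cball x (infdist x A)"
    unfolding nearest_points_def using infdist_le[of _ A x] by force
  then show ?thesis using closed_Int_compact[OF assms compact_cball] by simp
qed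

lemma nearest_points_limit:
  assumes "closed A" "xs \<longlonglongrightarrow> x" "as \<longlonglongrightarrow> a" "\<And>k. as k \<in> nearest_points A (xs k)"
  shows "a \<in> nearest_points A x"
proof -
  have "a \<in> A"
    using closed_sequentially[OF assms(1) _ assms(3)] assms(4) nearest_points_subset by blast
  have "(\<lambda>k. dist (xs k) (as k)) \<longlonglongrightarrow> dist x a"
    by (intro tendsto_intros assms(2,3))
  moreover have "(\<lambda>k. dist (xs k) (as k)) \<longlonglongrightarrow> infdist x A"
    using tendsto_infdist[OF assms(2)] assms(4) by (simp add: nearest_points_def)
  ultimately have "dist x a = infdist x A" by (rule LIMSEQ_unique)
  with \<open>a \<in> A\<close> show ?thesis unfolding nearest_points_def by simp
qed

lemma nearest_points_convergent_subseq:
  fixes A :: "'a::heine_borel set"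
  assumes "closed A" "xs \<longlonglongrightarrow> x" "\<And>k. as k \<in> nearest_points A (xs k)"
  obtains r a where "strict_mono r" "(as \<circ> r) \<longlonglongrightarrow> a" "a \<in> nearest_points A x"
proof -
  obtain B where B: "\<And>k. dist x (xs k) \<le> B"
    using convergent_imp_bounded[OF assms(2)] by (auto simp: bounded_any_center[of _ x])
  have "dist x (as k) \<le> 2 * B + infdist x A" for k
  proof -
    have "dist (xs k) (as k) = infdist (xs k) A"
      using assms(3) by (simp add: nearest_points_def)
    also have "\<dots> \<le> infdist x A + dist (xs k) x" by (rule infdist_triangle)
    finally show ?thesis
      using dist_triangle[of x "as k" "xs k"] B[of k] by (simp add: dist_commute)
  qed
  then have "bounded (range as)"
    by (auto simp: bounded_any_center[of _ x])
  then obtain a r where r: "strict_mono r" "(as \<circ> r) \<longlonglongrightarrow> a"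
    using bounded_imp_convergent_subsequence by blast
  have "(xs \<circ> r) \<longlonglongrightarrow> x" using LIMSEQ_subseq_LIMSEQ[OF assms(2) r(1)] .
  then have "a \<in> nearest_points A x"
    by (rule nearest_points_limit[OF assms(1) _ r(2)]) (simp add: assms(3))
  with r that show ?thesis by blast
qed

section \<open>The Asplund function and its subgradients\<close>

definition subgradients :: "('a::real_inner \<Rightarrow> real) \<Rightarrow> 'a \<Rightarrow> 'a set" where
  "subgradients f x = {c. \<forall>z. c \<bullet> (z - x) \<le> f z - f x}"

lemma convex_subgradients: "convex (subgradients f x)"
proof (rule convexI)
  fix c1 c2 and u v :: real
  assume c: "c1 \<in> subgradients f x" "c2 \<in> subgradients f x" and uv: "0 \<le> u" "0 \<le> v" "u + v = 1"
  show "u *\<^sub>R c1 + v *\<^sub>R c2 \<in> subgradients f x"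
    unfolding subgradients_def
  proof (intro CollectI allI)
    fix z
    have "(u *\<^sub>R c1 + v *\<^sub>R c2) \<bullet> (z - x) = u * (c1 \<bullet> (z - x)) + v * (c2 \<bullet> (z - x))"
      by (simp add: inner_add_left)
    also have "\<dots> \<le> u * (f z - f x) + v * (f z - f x)"
      using c uv by (intro add_mono mult_left_mono) (auto simp: subgradients_def)
    also have "\<dots> = f z - f x"
      using uv by (simp flip: distrib_right)
    finally show "(u *\<^sub>R c1 + v *\<^sub>R c2) \<bullet> (z - x) \<le> f z - f x" .
  qed
qed

definition asplund :: "'a::real_inner set \<Rightarrow> 'a \<Rightarrow> real" where
  "asplund A z = ((norm z)\<^sup>2 - (infdist z A)\<^sup>2) / 2"

lemma asplund_ge:
  assumes "a \<in> A"
  shows "z \<bullet> a - (norm a)\<^sup>2 / 2 \<le> asplund A z"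
proof -
  have "(infdist z A)\<^sup>2 \<le> (norm (z - a))\<^sup>2"
    using infdist_le[OF assms, of z] by (simp add: dist_norm power_mono infdist_nonneg)
  then show ?thesis
    unfolding asplund_def using dot_norm_neg[of z a] by simp
qed

lemma asplund_nearest_point:
  assumes "a \<in> nearest_points A x"
  shows "asplund A x = x \<bullet> a - (norm a)\<^sup>2 / 2"
  using assms dot_norm_neg[of x a] unfolding asplund_def nearest_points_def
  by (simp add: dist_norm)

lemma convex_on_asplund:
  fixes A :: "'a::euclidean_space set"
  assumes "closed A" "A \<noteq> {}"
  shows "convex_on UNIV (asplund A)"
proof (rule convex_onI)
  fix t :: real and u v :: 'a
  assume t: "0 < t" "t < 1"
  let ?w = "(1 - t) *\<^sub>R u + t *\<^sub>R v"
  obtain a where a: "a \<in> nearest_points A ?w"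
    using nearest_points_nonempty[OF assms] by blast
  then have "a \<in> A" using nearest_points_subset by blast
  have "asplund A ?w = ?w \<bullet> a - (norm a)\<^sup>2 / 2" by (rule asplund_nearest_point[OF a])
  also have "\<dots> = (1 - t) * (u \<bullet> a - (norm a)\<^sup>2 / 2) + t * (v \<bullet> a - (norm a)\<^sup>2 / 2)"
    by (simp add: inner_add_left algebra_simps diff_divide_distrib)
  also have "\<dots> \<le> (1 - t) * asplund A u + t * asplund A v"
    using asplund_ge[OF \<open>a \<in> A\<close>] t by (intro add_mono mult_left_mono) auto
  finally show "asplund A ?w \<le> (1 - t) * asplund A u + t * asplund A v" .
qed simp

lemma nearest_points_subset_subgradients_asplund:
  "nearest_points A x \<subseteq> subgradients (asplund A) x"
proof
  fix a assume a: "a \<in> nearest_points A x"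
  then have "a \<in> A" using nearest_points_subset by blast
  show "a \<in> subgradients (asplund A) x"
    unfolding subgradients_def
  proof (intro CollectI allI)
    fix z
    show "a \<bullet> (z - x) \<le> asplund A z - asplund A x"
      using asplund_ge[OF \<open>a \<in> A\<close>, of z] asplund_nearest_point[OF a]
      by (simp add: inner_diff_right inner_commute)
  qed
qed

text \<open>A subgradient c outside the compact convex set conv P(x) is separated from it by a direction e.
  Moving x by -t e and taking nearest points a_t, the subgradient inequality gives e.a_t \<le> e.c,
  while the a_t accumulate in P(x) as t \<rightarrow> 0.\<close>

lemma subgradients_asplund_subset_hull:
  fixes A :: "'a::euclidean_space set"
  assumes A: "closed A" "A \<noteq> {}" and c: "c \<in> subgradients (asplund A) x"
  shows "c \<in> convex hull (nearest_points A x)"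
proof (rule ccontr)
  let ?K = "convex hull (nearest_points A x)"
  assume "c \<notin> ?K"
  moreover have "closed ?K"
    by (intro compact_imp_closed compact_convex_hull compact_nearest_points A(1))
  ultimately obtain e b where eb: "e \<bullet> c < b" "\<And>y. y \<in> ?K \<Longrightarrow> b < e \<bullet> y"
    using separating_hyperplane_closed_point[OF convex_convex_hull] by metis
  define t :: "nat \<Rightarrow> real" where "t k = inverse (real (Suc k))" for k
  define xs where "xs k = x - t k *\<^sub>R e" for k
  have "t \<longlonglongrightarrow> 0" unfolding t_def by (rule LIMSEQ_inverse_real_of_nat)
  then have "(\<lambda>k. x - t k *\<^sub>R e) \<longlonglongrightarrow> x - 0 *\<^sub>R e" by (intro tendsto_intros)
  then have xs: "xs \<longlonglongrightarrow> x" unfolding xs_def by simp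
  define as where "as k = (SOME a. a \<in> nearest_points A (xs k))" for k
  have as: "as k \<in> nearest_points A (xs k)" for k
    unfolding as_def using nearest_points_nonempty[OF A] by (simp add: some_in_eq)
  have below: "e \<bullet> as k \<le> e \<bullet> c" for k
  proof -
    have "as k \<in> A" using as nearest_points_subset by blast
    have "- t k * (e \<bullet> c) = c \<bullet> (xs k - x)"
      unfolding xs_def by (simp add: inner_commute)
    also have "\<dots> \<le> asplund A (xs k) - asplund A x"
      using c by (simp add: subgradients_def)
    also have "\<dots> \<le> (xs k - x) \<bullet> as k"
      using asplund_nearest_point[OF as] asplund_ge[OF \<open>as k \<in> A\<close>, of x]
      by (simp add: inner_diff_left)
    also have "\<dots> = - t k * (e \<bullet> as k)"
      unfolding xs_def by simp
    finally show ?thesis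
      using mult_le_cancel_left_pos[of "t k"] by (simp add: t_def)
  qed
  obtain r a where r: "strict_mono r" "(as \<circ> r) \<longlonglongrightarrow> a" "a \<in> nearest_points A x"
    using nearest_points_convergent_subseq[OF A(1) xs as] by blast
  have "e \<bullet> a \<le> e \<bullet> c"
    by (rule tendsto_upperbound[OF tendsto_inner[OF tendsto_const r(2)]])
       (simp_all add: below)
  moreover have "b < e \<bullet> a" using r(3) by (intro eb(2) hull_inc)
  ultimately show False using eb(1) by simp
qed

lemma subgradients_asplund:
  fixes A :: "'a::euclidean_space set"
  assumes "closed A" "A \<noteq> {}"
  shows "subgradients (asplund A) x = convex hull (nearest_points A x)"
proof
  show "subgradients (asplund A) x \<subseteq> convex hull (nearest_points A x)"
    using subgradients_asplund_subset_hull[OF assms] by blast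
  show "convex hull (nearest_points A x) \<subseteq> subgradients (asplund A) x"
    by (intro hull_minimal nearest_points_subset_subgradients_asplund convex_subgradients)
qed

section \<open>The Clarke subdifferential of the squared distance\<close>

lemma power2_norm_add:
  fixes u v :: "'a::real_inner"
  shows "(norm (u + v))\<^sup>2 = (norm u)\<^sup>2 + 2 * (u \<bullet> v) + (norm v)\<^sup>2"
  using dot_norm[of u v] by simp

lemma has_derivative_of_quadratic_remainder:
  fixes f :: "'a::real_normed_vector \<Rightarrow> real"
  assumes L: "bounded_linear L" and rem: "\<And>h. \<bar>f (y + h) - f y - L h\<bar> \<le> K * (norm h)\<^sup>2"
  shows "(f has_derivative L) (at y)"
  unfolding has_derivative_iff_norm
proof (intro conjI L)
  have bound: "norm (norm (f z - f y - L (z - y)) / norm (z - y)) \<le> K * norm (z - y)" for z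
  proof (cases "z = y")
    case False
    then have pos: "0 < norm (z - y)" by simp
    have "\<bar>f z - f y - L (z - y)\<bar> / norm (z - y) \<le> K * (norm (z - y))\<^sup>2 / norm (z - y)"
      using rem[of "z - y"] pos by (intro divide_right_mono) auto
    also have "\<dots> = K * norm (z - y)" using pos by (simp add: power2_eq_square)
    finally show ?thesis by simp
  qed simp
  have "((\<lambda>z. K * norm (z - y)) \<longlongrightarrow> K * norm (y - y)) (at y)"
    by (intro tendsto_intros)
  then have "((\<lambda>z. K * norm (z - y)) \<longlongrightarrow> 0) (at y)" by simp
  then show "((\<lambda>z. norm (f z - f y - L (z - y)) / norm (z - y)) \<longlongrightarrow> 0) (at y)"
    by (rule Lim_null_comparison[rotated]) (intro always_eventually allI bound)
qed

text \<open>If a is at least as close to x as b, then on the segment from x to a the point b stays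
  farther away by the margin t |a - b|^2; absorbing the cross term 2 (a - b) \<bullet> h into this
  margin costs at most |h|^2 / t.\<close>

lemma sq_dist_segment_lower:
  fixes x a b h :: "'a::real_inner"
  assumes ab: "norm (x - a) \<le> norm (x - b)" and t: "0 < t" "t \<le> 1"
    and y: "y = x + t *\<^sub>R (a - x)"
  shows "(norm (y - a))\<^sup>2 + 2 * ((y - a) \<bullet> h) + (norm h)\<^sup>2 - (norm h)\<^sup>2 / t \<le> (norm (y + h - b))\<^sup>2"
proof -
  define u where "u = x - a"
  define s where "s = norm (a - b)"
  have ya: "y - a = (1 - t) *\<^sub>R u" and yb: "y - b = (1 - t) *\<^sub>R u + (a - b)"
    unfolding u_def y by (simp_all add: algebra_simps)
  have "(norm u)\<^sup>2 \<le> (norm (u + (a - b)))\<^sup>2"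
    using ab unfolding u_def by (simp add: power_mono)
  then have "0 \<le> 2 * (u \<bullet> (a - b)) + s\<^sup>2"
    unfolding s_def power2_norm_add by simp
  then have "0 \<le> (1 - t) * (2 * (u \<bullet> (a - b)) + s\<^sup>2)"
    using t by simp
  moreover have "(norm (y - b))\<^sup>2 = (norm (y - a))\<^sup>2 + (1 - t) * (2 * (u \<bullet> (a - b))) + s\<^sup>2"
    unfolding yb ya power2_norm_add s_def by simp
  ultimately have margin: "(norm (y - a))\<^sup>2 + t * s\<^sup>2 \<le> (norm (y - b))\<^sup>2"
    by (simp add: algebra_simps)
  have "- (s * norm h) \<le> (a - b) \<bullet> h"
    using norm_cauchy_schwarz[of "b - a" h] unfolding s_def
    by (simp add: inner_diff_left norm_minus_commute)
  moreover have "0 \<le> (t * s - norm h)\<^sup>2 / t" using t by simp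
  then have "- ((norm h)\<^sup>2 / t) \<le> t * s\<^sup>2 - 2 * (s * norm h)"
    using t by (simp add: field_simps power2_eq_square)
  moreover have "y + h - b = (y - b) + h" by simp
  then have "(norm (y + h - b))\<^sup>2 = (norm (y - b))\<^sup>2 + 2 * ((y - b) \<bullet> h) + (norm h)\<^sup>2"
    by (simp only: power2_norm_add)
  moreover have "(y - b) \<bullet> h = (y - a) \<bullet> h + (a - b) \<bullet> h"
    by (simp add: inner_diff_left)
  ultimately show ?thesis using margin by linarith
qed

lemma nearest_points_segment:
  fixes A :: "'a::real_inner set"
  assumes a: "a \<in> nearest_points A x" and t: "0 < t" "t \<le> 1"
  shows "a \<in> nearest_points A (x + t *\<^sub>R (a - x))"
proof (rule nearest_pointsI)
  show "a \<in> A" using a nearest_points_subset by blast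
  fix b assume "b \<in> A"
  then have "norm (x - a) \<le> norm (x - b)"
    using a infdist_le[of b A x] by (simp add: nearest_points_def dist_norm)
  from sq_dist_segment_lower[OF this t refl, of 0]
  have "(norm (x + t *\<^sub>R (a - x) - a))\<^sup>2 \<le> (norm (x + t *\<^sub>R (a - x) - b))\<^sup>2"
    by simp
  then show "dist (x + t *\<^sub>R (a - x)) a \<le> dist (x + t *\<^sub>R (a - x)) b"
    unfolding dist_norm by (rule power2_le_imp_le) simp
qed

lemma has_derivative_sq_infdist_segment:
  fixes A :: "'a::euclidean_space set"
  assumes A: "closed A" "A \<noteq> {}" and a: "a \<in> nearest_points A x" and t: "0 < t" "t \<le> 1"
    and y: "y = x + t *\<^sub>R (a - x)"
  shows "((\<lambda>z. (infdist z A)\<^sup>2) has_derivative (\<lambda>h. (2 *\<^sub>R (y - a)) \<bullet> h)) (at y)"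
proof (rule has_derivative_of_quadratic_remainder[where K = "1 / t"])
  show "bounded_linear (\<lambda>h. (2 *\<^sub>R (y - a)) \<bullet> h)" by (rule bounded_linear_inner_right)
  fix h
  have "a \<in> A" using a nearest_points_subset by blast
  have at_y: "(infdist y A)\<^sup>2 = (norm (y - a))\<^sup>2"
    using nearest_points_segment[OF a t] unfolding y by (simp add: nearest_points_def dist_norm)
  have "y + h - a = (y - a) + h" by simp
  then have "(norm (y + h - a))\<^sup>2 = (norm (y - a))\<^sup>2 + 2 * ((y - a) \<bullet> h) + (norm h)\<^sup>2"
    by (simp only: power2_norm_add)
  moreover have "(infdist (y + h) A)\<^sup>2 \<le> (norm (y + h - a))\<^sup>2"
    using infdist_le[OF \<open>a \<in> A\<close>, of "y + h"]
    by (simp add: dist_norm power_mono infdist_nonneg)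
  ultimately have upper: "(infdist (y + h) A)\<^sup>2 \<le> (norm (y - a))\<^sup>2 + 2 * ((y - a) \<bullet> h) + (norm h)\<^sup>2"
    by simp
  obtain b where b: "b \<in> nearest_points A (y + h)"
    using nearest_points_nonempty[OF A] by blast
  then have "b \<in> A" using nearest_points_subset by blast
  then have "norm (x - a) \<le> norm (x - b)"
    using a infdist_le[of b A x] by (simp add: nearest_points_def dist_norm)
  from sq_dist_segment_lower[OF this t y, of h] b
  have lower: "(norm (y - a))\<^sup>2 + 2 * ((y - a) \<bullet> h) + (norm h)\<^sup>2 - (norm h)\<^sup>2 / t \<le> (infdist (y + h) A)\<^sup>2"
    by (simp add: nearest_points_def dist_norm)
  have "(norm h)\<^sup>2 \<le> (norm h)\<^sup>2 / t"
    using t mult_right_le_one_le[of "(norm h)\<^sup>2" t] by (simp add: le_divide_eq)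
  moreover have "(2 *\<^sub>R (y - a)) \<bullet> h = 2 * ((y - a) \<bullet> h)" "1 / t * (norm h)\<^sup>2 = (norm h)\<^sup>2 / t"
    by simp_all
  ultimately
  show "\<bar>(infdist (y + h) A)\<^sup>2 - (infdist y A)\<^sup>2 - (2 *\<^sub>R (y - a)) \<bullet> h\<bar> \<le> 1 / t * (norm h)\<^sup>2"
    using upper lower at_y zero_le_power2[of "norm h"] unfolding abs_le_iff by linarith
qed

lemma gradient_sq_infdist:
  fixes A :: "'a::real_inner set"
  assumes d: "((\<lambda>z. (infdist z A)\<^sup>2) has_derivative (\<lambda>h. v \<bullet> h)) (at y)"
    and a: "a \<in> nearest_points A y"
  shows "v = 2 *\<^sub>R (y - a)"
proof -
  have "a \<in> A" using a nearest_points_subset by blast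
  have "((\<lambda>z. (z - a) \<bullet> (z - a)) has_derivative (\<lambda>h. h \<bullet> (y - a) + (y - a) \<bullet> h)) (at y)"
    by (auto intro!: derivative_eq_intros)
  from has_derivative_diff[OF this d]
  have "((\<lambda>z. (z - a) \<bullet> (z - a) - (infdist z A)\<^sup>2) has_derivative
          (\<lambda>h. h \<bullet> (y - a) + (y - a) \<bullet> h - v \<bullet> h)) (at y)" .
  moreover have "(y - a) \<bullet> (y - a) - (infdist y A)\<^sup>2 \<le> (z - a) \<bullet> (z - a) - (infdist z A)\<^sup>2" for z
  proof -
    have "(infdist z A)\<^sup>2 \<le> (norm (z - a))\<^sup>2"
      using infdist_le[OF \<open>a \<in> A\<close>, of z] by (simp add: dist_norm power_mono infdist_nonneg)
    moreover have "infdist y A = norm (y - a)"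
      using a by (simp add: nearest_points_def dist_norm)
    ultimately show ?thesis by (simp add: power2_norm_eq_inner)
  qed
  ultimately have "(\<lambda>h. h \<bullet> (y - a) + (y - a) \<bullet> h - v \<bullet> h) = (\<lambda>h. 0)"
    by (intro has_derivative_local_min always_eventually allI)
  from fun_cong[OF this, of "2 *\<^sub>R (y - a) - v"]
  have "(2 *\<^sub>R (y - a) - v) \<bullet> (2 *\<^sub>R (y - a) - v) = 0"
    by (simp add: inner_diff_left inner_diff_right inner_commute)
  then show ?thesis by simp
qed

lemma limiting_gradients_sq_infdist:
  fixes A :: "'a::euclidean_space set"
  assumes A: "closed A" "A \<noteq> {}"
  shows "{v. \<exists>xs vs. (\<forall>\<nu>. ((\<lambda>z. (infdist z A)\<^sup>2) has_derivative (\<lambda>h. vs \<nu> \<bullet> h)) (at (xs \<nu>)))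
                 \<and> xs \<longlonglongrightarrow> x \<and> vs \<longlonglongrightarrow> v}
         = (\<lambda>a. 2 *\<^sub>R (x - a)) ` nearest_points A x" (is "?R = ?G")
proof
  show "?R \<subseteq> ?G"
  proof
    fix v assume "v \<in> ?R"
    then obtain xs vs where d: "\<And>\<nu>. ((\<lambda>z. (infdist z A)\<^sup>2) has_derivative (\<lambda>h. vs \<nu> \<bullet> h)) (at (xs \<nu>))"
      and xs: "xs \<longlonglongrightarrow> x" and vs: "vs \<longlonglongrightarrow> v"
      by blast
    define as where "as k = (SOME a. a \<in> nearest_points A (xs k))" for k
    have as: "as k \<in> nearest_points A (xs k)" for k
      unfolding as_def using nearest_points_nonempty[OF A] by (simp add: some_in_eq)
    have "as = (\<lambda>k. xs k - (1 / 2) *\<^sub>R vs k)"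
      using gradient_sq_infdist[OF d as] by auto
    then have "as \<longlonglongrightarrow> x - (1 / 2) *\<^sub>R v"
      by (simp only:) (intro tendsto_intros xs vs)
    then have "x - (1 / 2) *\<^sub>R v \<in> nearest_points A x"
      using nearest_points_limit[OF A(1) xs _ as] by blast
    then show "v \<in> ?G" by (rule rev_image_eqI) simp
  qed
  show "?G \<subseteq> ?R"
  proof
    fix v assume "v \<in> ?G"
    then obtain a where a: "a \<in> nearest_points A x" and v: "v = 2 *\<^sub>R (x - a)" by blast
    define t :: "nat \<Rightarrow> real" where "t k = inverse (real (Suc k))" for k
    define xs where "xs k = x + t k *\<^sub>R (a - x)" for k
    have "t \<longlonglongrightarrow> 0" unfolding t_def by (rule LIMSEQ_inverse_real_of_nat)
    then have "(\<lambda>k. x + t k *\<^sub>R (a - x)) \<longlonglongrightarrow> x + 0 *\<^sub>R (a - x)" by (intro tendsto_intros)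
    then have xs: "xs \<longlonglongrightarrow> x" unfolding xs_def by simp
    have "((\<lambda>z. (infdist z A)\<^sup>2) has_derivative (\<lambda>h. (2 *\<^sub>R (xs k - a)) \<bullet> h)) (at (xs k))" for k
      by (rule has_derivative_sq_infdist_segment[OF A a _ _ xs_def]) (auto simp: t_def field_simps)
    moreover have "(\<lambda>k. 2 *\<^sub>R (xs k - a)) \<longlonglongrightarrow> v"
      unfolding v by (intro tendsto_intros xs)
    ultimately show "v \<in> ?R"
      using xs by (intro CollectI exI[of _ xs] exI[of _ "\<lambda>k. 2 *\<^sub>R (xs k - a)"]) simp
  qed
qed

lemma clarke_subdiff_sq_infdist:
  fixes A :: "(real^2) set"
  assumes "closed A" "A \<noteq> {}"
  shows "clarke_subdiff (\<lambda>a. (infdist a A)\<^sup>2) x = (\<lambda>c. 2 *\<^sub>R (x - c)) ` (convex hull (nearest_points A x))"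
proof -
  have affine: "(\<lambda>c. 2 *\<^sub>R (x - c)) ` S = (\<lambda>z. 2 *\<^sub>R x + z) ` (\<lambda>c. (- 2) *\<^sub>R c) ` S" for S :: "(real^2) set"
    by (simp add: image_image scaleR_diff_right)
  show ?thesis
    unfolding clarke_subdiff_def limiting_gradients_sq_infdist[OF assms] affine
      convex_hull_translation convex_hull_scaling ..
qed

lemma graph_clarke_subdiff_sq_infdist:
  fixes A :: "(real^2) set"
  assumes "closed A" "A \<noteq> {}"
  shows "graph_of (clarke_subdiff (\<lambda>a. (infdist a A)\<^sup>2))
    = (\<lambda>q. (fst q, 2 *\<^sub>R (fst q - snd q))) ` graph_of (subgradients (asplund A))"
  unfolding graph_of_def clarke_subdiff_sq_infdist[OF assms] subgradients_asplund[OF assms]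
  by (auto intro: rev_image_eqI)

lemma homeomorphism_prod_shear:
  "homeomorphism UNIV UNIV (\<lambda>q :: 'a::real_normed_vector \<times> 'a. (fst q, 2 *\<^sub>R (fst q - snd q)))
    (\<lambda>q. (fst q, fst q - (1 / 2) *\<^sub>R snd q))"
  by (rule homeomorphismI) (auto intro!: continuous_intros)

section \<open>Painleve-Kuratowski convergence and distance functions\<close>

lemma frequently_sequentially_subseq:
  assumes "frequently P sequentially"
  shows "\<exists>r :: nat \<Rightarrow> nat. strict_mono r \<and> (\<forall>k. P (r k))"
proof -
  have "infinite {n. P n}"
    using assms by (simp add: infinite_nat_iff_unbounded_le frequently_sequentially)
  from infinite_enumerate[OF this] show ?thesis by simp
qed

lemma PK_liminf_subset_limsup: "PK_liminf A \<subseteq> PK_limsup A"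
proof
  fix x assume "x \<in> PK_liminf A"
  then obtain xs where "\<And>n. xs n \<in> A n" "xs \<longlonglongrightarrow> x" unfolding PK_liminf_def by blast
  moreover have "strict_mono (\<lambda>k::nat. k)" by (simp add: strict_mono_def)
  ultimately show "x \<in> PK_limsup A" unfolding PK_limsup_def by blast
qed

lemma PK_liminf_image_subset:
  assumes "continuous_on UNIV h"
  shows "h ` PK_liminf A \<subseteq> PK_liminf (\<lambda>n. h ` A n)"
proof
  fix y assume "y \<in> h ` PK_liminf A"
  then obtain x xs where y: "y = h x" and xs: "\<And>n. xs n \<in> A n" "xs \<longlonglongrightarrow> x"
    unfolding PK_liminf_def by blast
  have "(\<lambda>n. h (xs n)) \<longlonglongrightarrow> h x"
    using continuous_on_tendsto_compose[OF assms xs(2)] by simp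
  with xs(1) show "y \<in> PK_liminf (\<lambda>n. h ` A n)"
    unfolding PK_liminf_def y by (intro CollectI exI[of _ "\<lambda>n. h (xs n)"]) auto
qed

lemma PK_limsup_image_subset:
  assumes "continuous_on UNIV h"
  shows "h ` PK_limsup A \<subseteq> PK_limsup (\<lambda>n. h ` A n)"
proof
  fix y assume "y \<in> h ` PK_limsup A"
  then obtain x r xs where y: "y = h x" and xs: "strict_mono r" "\<And>k. xs k \<in> A (r k)" "xs \<longlonglongrightarrow> x"
    unfolding PK_limsup_def by blast
  have "(\<lambda>k. h (xs k)) \<longlonglongrightarrow> h x"
    using continuous_on_tendsto_compose[OF assms xs(3)] by simp
  with xs(1,2) show "y \<in> PK_limsup (\<lambda>n. h ` A n)"
    unfolding PK_limsup_def y by (intro CollectI exI[of _ r] exI[of _ "\<lambda>k. h (xs k)"]) auto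
qed

lemma PK_converges_homeomorphism_image:
  assumes hom: "homeomorphism UNIV UNIV h k" and conv: "PK_converges A L"
  shows "PK_converges (\<lambda>n. h ` A n) (h ` L)"
proof -
  have h: "continuous_on UNIV h" and k: "continuous_on UNIV k"
    and kh: "\<And>x. k (h x) = x" and hk: "\<And>y. h (k y) = y"
    using hom by (auto simp: homeomorphism_def)
  have pull: "S \<subseteq> h ` T" if "k ` S \<subseteq> T" for S T
  proof
    fix y assume "y \<in> S"
    with that have "k y \<in> T" by blast
    then show "y \<in> h ` T" using hk[of y] by force
  qed
  have "PK_liminf (\<lambda>n. h ` A n) = h ` PK_liminf A"
  proof
    have "k ` PK_liminf (\<lambda>n. h ` A n) \<subseteq> PK_liminf A"
      using PK_liminf_image_subset[OF k, of "\<lambda>n. h ` A n"] by (simp add: image_image kh)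
    then show "PK_liminf (\<lambda>n. h ` A n) \<subseteq> h ` PK_liminf A" by (rule pull)
  qed (rule PK_liminf_image_subset[OF h])
  moreover have "PK_limsup (\<lambda>n. h ` A n) = h ` PK_limsup A"
  proof
    have "k ` PK_limsup (\<lambda>n. h ` A n) \<subseteq> PK_limsup A"
      using PK_limsup_image_subset[OF k, of "\<lambda>n. h ` A n"] by (simp add: image_image kh)
    then show "PK_limsup (\<lambda>n. h ` A n) \<subseteq> h ` PK_limsup A" by (rule pull)
  qed (rule PK_limsup_image_subset[OF h])
  ultimately show ?thesis using conv unfolding PK_converges_def by simp
qed

lemma PK_converges_nonempty:
  assumes "PK_converges A L" "L \<noteq> {}"
  shows "A n \<noteq> {}"
  using assms unfolding PK_converges_def PK_liminf_def by auto

lemma eventually_infdist_PK_less: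
  assumes "PK_converges A L" "a \<in> L" "dist z a < e"
  shows "eventually (\<lambda>n. infdist z (A n) < e) sequentially"
proof -
  obtain xs where xs: "\<And>n. xs n \<in> A n" "xs \<longlonglongrightarrow> a"
    using assms(1,2) unfolding PK_converges_def PK_liminf_def by blast
  have "eventually (\<lambda>n. dist (xs n) a < e - dist z a) sequentially"
    using assms(3) by (intro tendstoD xs(2)) simp
  then show ?thesis
  proof (rule eventually_mono)
    fix n assume "dist (xs n) a < e - dist z a"
    moreover have "infdist z (A n) \<le> dist z a + dist (xs n) a"
      using infdist_le[OF xs(1)] dist_triangle2[of z "xs n" a] by (meson order_trans)
    ultimately show "infdist z (A n) < e" by simp
  qed
qed

lemma closed_PK_limit:
  fixes A :: "nat \<Rightarrow> 'a::heine_borel set"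
  assumes cl: "\<And>n. closed (A n)" and ne: "L \<noteq> {}" and conv: "PK_converges A L"
  shows "closed L"
  unfolding closed_sequential_limits
proof (intro allI impI, elim conjE)
  fix p l assume p: "\<forall>n. p n \<in> L" and "p \<longlonglongrightarrow> l"
  define s where "s n = (SOME b. b \<in> nearest_points (A n) l)" for n
  have s: "s n \<in> nearest_points (A n) l" for n
    unfolding s_def using nearest_points_nonempty[OF cl PK_converges_nonempty[OF conv ne]]
    by (simp add: some_in_eq)
  have ds: "dist (s n) l = infdist l (A n)" for n
    using s[of n] by (simp add: nearest_points_def dist_commute)
  have "(\<lambda>n. dist (s n) l) \<longlonglongrightarrow> 0"
  proof (rule tendstoI)
    fix e :: real assume "0 < e"
    then obtain N where "\<And>n. N \<le> n \<Longrightarrow> dist (p n) l < e"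
      using \<open>p \<longlonglongrightarrow> l\<close> unfolding lim_sequentially by blast
    then have "dist l (p N) < e" by (simp add: dist_commute)
    then have "eventually (\<lambda>n. infdist l (A n) < e) sequentially"
      by (rule eventually_infdist_PK_less[OF conv p[rule_format]])
    then show "eventually (\<lambda>n. dist (dist (s n) l) 0 < e) sequentially"
      by (rule eventually_mono) (simp add: ds infdist_nonneg)
  qed
  then have "s \<longlonglongrightarrow> l" by (rule tendsto_dist_iff[THEN iffD2])
  moreover have "s n \<in> A n" for n using s nearest_points_subset by blast
  ultimately have "l \<in> PK_liminf A" unfolding PK_liminf_def by blast
  then show "l \<in> L" using conv unfolding PK_converges_def by simp
qed

lemma tendsto_infdist_PK:
  fixes A :: "nat \<Rightarrow> 'a::heine_borel set"
  assumes cl: "\<And>n. closed (A n)" and ne: "L \<noteq> {}" and conv: "PK_converges A L"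
  shows "(\<lambda>n. infdist z (A n)) \<longlonglongrightarrow> infdist z L"
proof (rule order_tendstoI)
  fix u assume u: "u < infdist z L"
  show "eventually (\<lambda>n. u < infdist z (A n)) sequentially"
  proof (rule ccontr)
    assume "\<not> ?thesis"
    then have "frequently (\<lambda>n. infdist z (A n) \<le> u) sequentially"
      by (simp add: not_eventually not_less)
    from frequently_sequentially_subseq[OF this]
    obtain r :: "nat \<Rightarrow> nat" where r: "strict_mono r" "\<And>k. infdist z (A (r k)) \<le> u"
      by blast
    define b where "b k = (SOME b. b \<in> nearest_points (A (r k)) z)" for k
    have b: "b k \<in> nearest_points (A (r k)) z" for k
      unfolding b_def using nearest_points_nonempty[OF cl PK_converges_nonempty[OF conv ne]]
      by (simp add: some_in_eq)
    have bz: "b k \<in> cball z u" for k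
      using b[of k] r(2)[of k] by (simp add: nearest_points_def)
    obtain l s where l: "l \<in> cball z u" "strict_mono s" "(b \<circ> s) \<longlonglongrightarrow> l"
      by (rule seq_compactE[OF compact_imp_seq_compact[OF compact_cball], of b]) (use bz in blast)+
    have "strict_mono (r \<circ> s)" using r(1) l(2) by (rule strict_mono_o)
    moreover have "(b \<circ> s) k \<in> A ((r \<circ> s) k)" for k
      using b nearest_points_subset by auto
    ultimately have "l \<in> PK_limsup A" unfolding PK_limsup_def using l(3) by blast
    then have "infdist z L \<le> dist z l"
      using conv infdist_le unfolding PK_converges_def by blast
    with l(1) u show False by simp
  qed
next
  fix u assume "infdist z L < u"
  obtain a where "a \<in> nearest_points L z"
    using nearest_points_nonempty[OF closed_PK_limit[OF cl ne conv] ne] by blast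
  with \<open>infdist z L < u\<close> show "eventually (\<lambda>n. infdist z (A n) < u) sequentially"
    by (intro eventually_infdist_PK_less[OF conv]) (auto simp: nearest_points_def)
qed

lemma tendsto_infdist_PK_subseq:
  fixes A :: "nat \<Rightarrow> 'a::heine_borel set"
  assumes "\<And>n. closed (A n)" "L \<noteq> {}" "PK_converges A L"
    and r: "strict_mono r" and zs: "zs \<longlonglongrightarrow> z"
  shows "(\<lambda>k. infdist (zs k) (A (r k))) \<longlonglongrightarrow> infdist z L"
proof -
  have "(\<lambda>k. infdist z (A (r k))) \<longlonglongrightarrow> infdist z L"
    using LIMSEQ_subseq_LIMSEQ[OF tendsto_infdist_PK[OF assms(1-3)] r] by (simp add: o_def)
  moreover have "(\<lambda>k. infdist (zs k) (A (r k)) - infdist z (A (r k))) \<longlonglongrightarrow> 0"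
  proof (rule Lim_null_comparison)
    show "eventually (\<lambda>k. norm (infdist (zs k) (A (r k)) - infdist z (A (r k))) \<le> dist (zs k) z) sequentially"
      by (intro always_eventually allI) (simp add: infdist_triangle_abs)
    show "(\<lambda>k. dist (zs k) z) \<longlonglongrightarrow> 0" using zs by (rule tendsto_dist_iff[THEN iffD1])
  qed
  ultimately have "(\<lambda>k. infdist z (A (r k)) + (infdist (zs k) (A (r k)) - infdist z (A (r k))))
      \<longlonglongrightarrow> infdist z L + 0"
    by (rule tendsto_add)
  then show ?thesis by simp
qed

lemma tendsto_asplund_PK_subseq:
  fixes A :: "nat \<Rightarrow> 'a::euclidean_space set"
  assumes "\<And>n. closed (A n)" "L \<noteq> {}" "PK_converges A L"
    and "strict_mono r" "zs \<longlonglongrightarrow> z"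
  shows "(\<lambda>k. asplund (A (r k)) (zs k)) \<longlonglongrightarrow> asplund L z"
  unfolding asplund_def by (intro tendsto_intros tendsto_infdist_PK_subseq[OF assms] assms(5)) simp

section \<open>Convergence of subdifferential graphs of convex functions\<close>

lemma PK_limsup_graph_subgradients_subset:
  fixes f :: "nat \<Rightarrow> 'a::real_inner \<Rightarrow> real"
  assumes joint: "\<And>r zs z. strict_mono r \<Longrightarrow> zs \<longlonglongrightarrow> z \<Longrightarrow> (\<lambda>k. f (r k) (zs k)) \<longlonglongrightarrow> g z"
  shows "PK_limsup (\<lambda>n. graph_of (subgradients (f n))) \<subseteq> graph_of (subgradients g)"
proof
  fix q assume "q \<in> PK_limsup (\<lambda>n. graph_of (subgradients (f n)))"
  then obtain r :: "nat \<Rightarrow> nat" and qs where r: "strict_mono r"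
    and qs: "\<And>k. snd (qs k) \<in> subgradients (f (r k)) (fst (qs k))" and lim: "qs \<longlonglongrightarrow> q"
    unfolding PK_limsup_def graph_of_def by (auto simp: case_prod_beta)
  have ps: "(\<lambda>k. fst (qs k)) \<longlonglongrightarrow> fst q" and cs: "(\<lambda>k. snd (qs k)) \<longlonglongrightarrow> snd q"
    using tendsto_fst[OF lim] tendsto_snd[OF lim] by simp_all
  have "snd q \<bullet> (z - fst q) \<le> g z - g (fst q)" for z
  proof (rule tendsto_le[OF trivial_limit_sequentially])
    have "(\<lambda>k. f (r k) z) \<longlonglongrightarrow> g z" using joint[OF r tendsto_const] .
    moreover have "(\<lambda>k. f (r k) (fst (qs k))) \<longlonglongrightarrow> g (fst q)" using joint[OF r ps] .
    ultimately show "(\<lambda>k. f (r k) z - f (r k) (fst (qs k))) \<longlonglongrightarrow> g z - g (fst q)"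
      by (rule tendsto_diff)
    show "(\<lambda>k. snd (qs k) \<bullet> (z - fst (qs k))) \<longlonglongrightarrow> snd q \<bullet> (z - fst q)"
      by (intro tendsto_intros ps cs)
    show "eventually (\<lambda>k. snd (qs k) \<bullet> (z - fst (qs k)) \<le> f (r k) z - f (r k) (fst (qs k))) sequentially"
      using qs by (simp add: subgradients_def)
  qed
  then show "q \<in> graph_of (subgradients g)"
    by (simp add: graph_of_def subgradients_def case_prod_beta)
qed

definition prox_objective :: "('a::real_inner \<Rightarrow> real) \<Rightarrow> 'a \<Rightarrow> 'a \<Rightarrow> 'a \<Rightarrow> real" where
  "prox_objective f c p y = f y - c \<bullet> y + (norm (y - p))\<^sup>2 / 2"

lemma tendsto_prox_objective:
  fixes f :: "nat \<Rightarrow> 'a::real_inner \<Rightarrow> real"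
  assumes joint: "\<And>r zs z. strict_mono r \<Longrightarrow> zs \<longlonglongrightarrow> z \<Longrightarrow> (\<lambda>k. f (r k) (zs k)) \<longlonglongrightarrow> g z"
    and r: "strict_mono r" and ws: "ws \<longlonglongrightarrow> w"
  shows "(\<lambda>k. prox_objective (f (r k)) c p (ws k)) \<longlonglongrightarrow> prox_objective g c p w"
  unfolding prox_objective_def by (intro tendsto_intros joint[OF r ws] ws) simp

lemma prox_objective_growth:
  assumes "c \<in> subgradients g p"
  shows "prox_objective g c p p + (norm (y - p))\<^sup>2 / 2 \<le> prox_objective g c p y"
  using assms unfolding subgradients_def prox_objective_def
  by (auto simp: inner_diff_right dest: spec[of _ y])

lemma prox_objective_minimizer_exists:
  fixes f :: "'a::euclidean_space \<Rightarrow> real"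
  assumes cont: "continuous_on UNIV f" and minorant: "\<And>y. a \<bullet> y + b \<le> f y"
  shows "\<exists>m. \<forall>y. prox_objective f c p m \<le> prox_objective f c p y"
proof -
  let ?F = "prox_objective f c p"
  define B where "B = norm (a - c)"
  define K where "K = ?F p - b - (a - c) \<bullet> p"
  define R where "R = 2 * B + 2 * \<bar>K\<bar> + 2"
  have far: "?F p < ?F y" if "R < norm (y - p)" for y
  proof -
    define \<rho> where "\<rho> = norm (y - p)"
    have "(a - c) \<bullet> (y - p) \<ge> - (B * \<rho>)"
      using norm_cauchy_schwarz[of "c - a" "y - p"] unfolding B_def \<rho>_def
      by (simp add: inner_diff_left norm_minus_commute)
    then have lin: "(a - c) \<bullet> p - B * \<rho> \<le> (a - c) \<bullet> y"
      by (simp add: inner_diff_right)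
    have "\<bar>K\<bar> + 1 < \<rho> / 2 - B" "1 < \<rho>"
      using that norm_ge_zero[of "a - c"] abs_ge_zero[of K] unfolding R_def \<rho>_def B_def
      by linarith+
    then have "(\<bar>K\<bar> + 1) * 1 < (\<rho> / 2 - B) * \<rho>"
      by (intro mult_strict_mono) auto
    then have "K < \<rho>\<^sup>2 / 2 - B * \<rho>"
      by (simp add: power2_eq_square algebra_simps)
    moreover have "a \<bullet> y + b - c \<bullet> y + \<rho>\<^sup>2 / 2 \<le> ?F y"
      using minorant[of y] unfolding prox_objective_def \<rho>_def by simp
    ultimately show ?thesis
      using lin unfolding K_def by (simp add: inner_diff_left)
  qed
  have "continuous_on UNIV ?F"
    unfolding prox_objective_def by (intro continuous_intros cont) simp
  moreover have "p \<in> cball p R" unfolding R_def B_def by simp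
  ultimately obtain m where m: "m \<in> cball p R" "\<And>y. y \<in> cball p R \<Longrightarrow> ?F m \<le> ?F y"
    using continuous_attains_inf[OF compact_cball, of p R ?F] continuous_on_subset by blast
  have "?F m \<le> ?F y" for y
  proof (cases "y \<in> cball p R")
    case False
    then have "?F p < ?F y" by (intro far) (simp add: dist_norm norm_minus_commute)
    with m(2)[of p] \<open>p \<in> cball p R\<close> show ?thesis by simp
  qed (rule m(2))
  then show ?thesis by blast
qed

lemma subgradient_at_prox_minimizer:
  fixes f :: "'a::real_inner \<Rightarrow> real"
  assumes convex: "convex_on UNIV f"
    and min: "\<And>y. prox_objective f c p m \<le> prox_objective f c p y"
  shows "c - (m - p) \<in> subgradients f m"
  unfolding subgradients_def
proof (intro CollectI allI)
  fix z
  define d where "d = z - m"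
  define Q where "Q = f z - f m - c \<bullet> d + (m - p) \<bullet> d"
  have step: "0 \<le> Q + t * (norm d)\<^sup>2 / 2" if t: "0 < t" "t \<le> 1" for t
  proof -
    define y where "y = m + t *\<^sub>R d"
    have "y = (1 - t) *\<^sub>R m + t *\<^sub>R z" unfolding y_def d_def by (simp add: algebra_simps)
    then have "f y \<le> (1 - t) * f m + t * f z"
      using convex_onD[OF convex, of t m z] t by simp
    then have fy: "f y \<le> f m - t * f m + t * f z" by (simp add: algebra_simps)
    have cy: "c \<bullet> y = c \<bullet> m + t * (c \<bullet> d)" unfolding y_def by (simp add: inner_add_right)
    have yp: "y - p = (m - p) + t *\<^sub>R d" unfolding y_def by simp
    have "(norm (y - p))\<^sup>2 = (norm (m - p))\<^sup>2 + 2 * ((m - p) \<bullet> (t *\<^sub>R d)) + (norm (t *\<^sub>R d))\<^sup>2"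
      unfolding yp by (rule power2_norm_add)
    then have ny: "(norm (y - p))\<^sup>2 = (norm (m - p))\<^sup>2 + 2 * (t * ((m - p) \<bullet> d)) + t\<^sup>2 * (norm d)\<^sup>2"
      by (simp add: power_mult_distrib)
    have "t * (Q + t * (norm d)\<^sup>2 / 2)
        = t * f z - t * f m - t * (c \<bullet> d) + t * ((m - p) \<bullet> d) + t\<^sup>2 * (norm d)\<^sup>2 / 2"
      unfolding Q_def by (simp add: algebra_simps power2_eq_square)
    moreover have "prox_objective f c p m \<le> prox_objective f c p y" by (rule min)
    ultimately have "0 \<le> t * (Q + t * (norm d)\<^sup>2 / 2)"
      using fy cy ny unfolding prox_objective_def by linarith
    with t show ?thesis by (simp add: zero_le_mult_iff)
  qed
  have "(\<lambda>k. Q + inverse (real (Suc k)) * (norm d)\<^sup>2 / 2) \<longlonglongrightarrow> Q + 0 * (norm d)\<^sup>2 / 2"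
    by (intro tendsto_intros LIMSEQ_inverse_real_of_nat) simp
  then have "0 \<le> Q + 0 * (norm d)\<^sup>2 / 2"
    by (rule tendsto_lowerbound) (auto intro!: always_eventually step simp: inverse_le_1_iff)
  then show "(c - (m - p)) \<bullet> (z - m) \<le> f z - f m"
    unfolding Q_def d_def by (simp add: inner_diff_left)
qed

lemma prox_objective_segment_le:
  fixes f :: "'a::real_inner \<Rightarrow> real"
  assumes convex: "convex_on UNIV f" and \<theta>: "0 \<le> \<theta>" "\<theta> \<le> 1"
  shows "prox_objective f c p (p + \<theta> *\<^sub>R (m - p))
    \<le> (1 - \<theta>) * prox_objective f c p p + \<theta> * prox_objective f c p m"
proof -
  have z: "p + \<theta> *\<^sub>R (m - p) = (1 - \<theta>) *\<^sub>R p + \<theta> *\<^sub>R m" by (simp add: algebra_simps)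
  have "f (p + \<theta> *\<^sub>R (m - p)) \<le> (1 - \<theta>) * f p + \<theta> * f m"
    unfolding z using convex_onD[OF convex \<theta>] by simp
  moreover have "c \<bullet> (p + \<theta> *\<^sub>R (m - p)) = (1 - \<theta>) * (c \<bullet> p) + \<theta> * (c \<bullet> m)"
    unfolding z by (simp add: inner_add_right)
  moreover have "(norm (p + \<theta> *\<^sub>R (m - p) - p))\<^sup>2 = \<theta>\<^sup>2 * (norm (m - p))\<^sup>2"
    by (simp add: power_mult_distrib)
  moreover have "\<theta>\<^sup>2 * (norm (m - p))\<^sup>2 \<le> \<theta> * (norm (m - p))\<^sup>2"
    using \<theta> by (intro mult_right_mono) (auto simp: power2_eq_square mult_left_le_one_le)
  ultimately show ?thesis
    unfolding prox_objective_def by (simp add: algebra_simps)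
qed

text \<open>If the minimizers m n stayed a distance e away from p along a subsequence, the points at
  distance e from p on the segments towards them would (by convexity) still have objective value
  at most that of p; in the limit this contradicts the strong convexity at p of the limit
  objective, which grows like half the squared distance because c is a subgradient of g at p.\<close>

lemma prox_minimizers_tendsto:
  fixes f :: "nat \<Rightarrow> 'a::euclidean_space \<Rightarrow> real" and m :: "nat \<Rightarrow> 'a"
  assumes convex: "\<And>n. convex_on UNIV (f n)"
    and joint: "\<And>r zs z. strict_mono r \<Longrightarrow> zs \<longlonglongrightarrow> z \<Longrightarrow> (\<lambda>k. f (r k) (zs k)) \<longlonglongrightarrow> g z"
    and c: "c \<in> subgradients g p"
    and min: "\<And>n y. prox_objective (f n) c p (m n) \<le> prox_objective (f n) c p y"
  shows "m \<longlonglongrightarrow> p"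
proof (rule tendstoI)
  fix e :: real assume e: "0 < e"
  show "eventually (\<lambda>n. dist (m n) p < e) sequentially"
  proof (rule ccontr)
    assume "\<not> ?thesis"
    then have "frequently (\<lambda>n. e \<le> dist (m n) p) sequentially"
      by (simp add: not_eventually not_less)
    from frequently_sequentially_subseq[OF this]
    obtain r :: "nat \<Rightarrow> nat" where r: "strict_mono r" "\<And>k. e \<le> dist (m (r k)) p"
      by blast
    define \<theta> where "\<theta> k = e / dist (m (r k)) p" for k
    define zs where "zs k = p + \<theta> k *\<^sub>R (m (r k) - p)" for k
    have \<theta>: "0 \<le> \<theta> k" "\<theta> k \<le> 1" for k
      unfolding \<theta>_def using r(2)[of k] e by (auto simp: divide_le_eq_1)
    have "zs k \<in> sphere p e" for k
      using r(2)[of k] e by (auto simp: zs_def \<theta>_def dist_norm norm_minus_commute)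
    then obtain l s where l: "l \<in> sphere p e" "strict_mono s" "(zs \<circ> s) \<longlonglongrightarrow> l"
      using seq_compactE[OF compact_imp_seq_compact[OF compact_sphere], of zs p e] by blast
    have rs: "strict_mono (\<lambda>k. r (s k))"
      using strict_mono_o[OF r(1) l(2)] by (simp add: o_def)
    have lim: "(\<lambda>k. prox_objective (f (r (s k))) c p (ws k)) \<longlonglongrightarrow> prox_objective g c p w"
      if "ws \<longlonglongrightarrow> w" for ws w
      using tendsto_prox_objective[where f = f and g = g, OF joint rs that] .
    have below: "prox_objective (f (r k)) c p (zs k) \<le> prox_objective (f (r k)) c p p" for k
    proof -
      have "prox_objective (f (r k)) c p (zs k)
          \<le> (1 - \<theta> k) * prox_objective (f (r k)) c p p + \<theta> k * prox_objective (f (r k)) c p (m (r k))"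
        unfolding zs_def by (rule prox_objective_segment_le[OF convex \<theta>])
      also have "\<dots> \<le> (1 - \<theta> k) * prox_objective (f (r k)) c p p + \<theta> k * prox_objective (f (r k)) c p p"
        using min[of "r k" p] \<theta>[of k] by (intro add_left_mono mult_left_mono) auto
      finally show ?thesis by (simp add: algebra_simps)
    qed
    have "prox_objective g c p l \<le> prox_objective g c p p"
    proof (rule tendsto_le[OF trivial_limit_sequentially lim[OF tendsto_const] lim])
      show "(\<lambda>k. zs (s k)) \<longlonglongrightarrow> l" using l(3) by (simp add: o_def)
    qed (intro always_eventually allI below)
    moreover have "norm (l - p) = e"
      using l(1) by (simp add: dist_norm norm_minus_commute)
    then have "prox_objective g c p p + e\<^sup>2 / 2 \<le> prox_objective g c p l"
      using prox_objective_growth[OF c, of l] by simp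
    moreover have "0 < e\<^sup>2 / 2" using e by simp
    ultimately show False by linarith
  qed
qed

lemma graph_subgradients_subset_PK_liminf:
  fixes f :: "nat \<Rightarrow> 'a::euclidean_space \<Rightarrow> real"
  assumes convex: "\<And>n. convex_on UNIV (f n)"
    and minorant: "\<And>n. \<exists>a b. \<forall>y. a \<bullet> y + b \<le> f n y"
    and joint: "\<And>r zs z. strict_mono r \<Longrightarrow> zs \<longlonglongrightarrow> z \<Longrightarrow> (\<lambda>k. f (r k) (zs k)) \<longlonglongrightarrow> g z"
  shows "graph_of (subgradients g) \<subseteq> PK_liminf (\<lambda>n. graph_of (subgradients (f n)))"
proof
  fix q assume "q \<in> graph_of (subgradients g)"
  then obtain p c where q: "q = (p, c)" and c: "c \<in> subgradients g p"
    by (auto simp: graph_of_def)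
  have "\<exists>m. \<forall>y. prox_objective (f n) c p m \<le> prox_objective (f n) c p y" for n
  proof -
    obtain a b where "\<And>y. a \<bullet> y + b \<le> f n y" using minorant by blast
    with convex_on_continuous[OF open_UNIV convex] show ?thesis
      by (rule prox_objective_minimizer_exists)
  qed
  then obtain m where m: "\<And>n y. prox_objective (f n) c p (m n) \<le> prox_objective (f n) c p y"
    by metis
  have "m \<longlonglongrightarrow> p" by (rule prox_minimizers_tendsto[OF convex joint c m])
  then have "(\<lambda>n. (m n, c - (m n - p))) \<longlonglongrightarrow> (p, c - (p - p))"
    by (intro tendsto_intros)
  moreover have "(m n, c - (m n - p)) \<in> graph_of (subgradients (f n))" for n
    using subgradient_at_prox_minimizer[OF convex m] by (simp add: graph_of_def)
  ultimately show "q \<in> PK_liminf (\<lambda>n. graph_of (subgradients (f n)))"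
    unfolding PK_liminf_def q by (intro CollectI exI[of _ "\<lambda>n. (m n, c - (m n - p))"]) simp
qed

theorem PK_converges_graph_subgradients:
  fixes f :: "nat \<Rightarrow> 'a::euclidean_space \<Rightarrow> real"
  assumes convex: "\<And>n. convex_on UNIV (f n)"
    and minorant: "\<And>n. \<exists>a b. \<forall>y. a \<bullet> y + b \<le> f n y"
    and joint: "\<And>r zs z. strict_mono r \<Longrightarrow> zs \<longlonglongrightarrow> z \<Longrightarrow> (\<lambda>k. f (r k) (zs k)) \<longlonglongrightarrow> g z"
  shows "PK_converges (\<lambda>n. graph_of (subgradients (f n))) (graph_of (subgradients g))"
  using graph_subgradients_subset_PK_liminf[where f = f and g = g, OF convex minorant joint]
    PK_limsup_graph_subgradients_subset[where f = f and g = g, OF joint]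
    PK_liminf_subset_limsup
  unfolding PK_converges_def by blast

lemma PK_converges_graph_subgradients_asplund:
  fixes A :: "nat \<Rightarrow> 'a::euclidean_space set"
  assumes closed: "\<And>n. closed (A n)" and "L \<noteq> {}" "PK_converges A L"
  shows "PK_converges (\<lambda>n. graph_of (subgradients (asplund (A n)))) (graph_of (subgradients (asplund L)))"
proof (rule PK_converges_graph_subgradients)
  have nonempty: "A n \<noteq> {}" for n using PK_converges_nonempty[OF assms(3,2)] .
  show "convex_on UNIV (asplund (A n))" for n
    by (rule convex_on_asplund[OF closed nonempty])
  show "\<exists>a b. \<forall>y. a \<bullet> y + b \<le> asplund (A n) y" for n
  proof -
    obtain a where "a \<in> A n" using nonempty by blast
    from asplund_ge[OF this] show ?thesis
      by (intro exI[of _ a] exI[of _ "- (norm a)\<^sup>2 / 2"] allI) (simp add: inner_commute)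
  qed
  show "(\<lambda>k. asplund (A (r k)) (zs k)) \<longlonglongrightarrow> asplund L z" if "strict_mono r" "zs \<longlonglongrightarrow> z" for r zs z
    by (rule tendsto_asplund_PK_subseq[OF closed assms(2,3) that])
qed

theorem mainTheorem5:
  fixes Xs :: "nat \<Rightarrow> (real^2) set" and X :: "(real^2) set"
  assumes "\<forall>n. closed (Xs n)"
    and "X \<noteq> {}"
    and "PK_converges Xs X"
  shows "graph_converges (\<lambda>n. clarke_subdiff (\<lambda>a. (infdist a (Xs n))\<^sup>2))
                         (clarke_subdiff (\<lambda>a. (infdist a X)\<^sup>2))"
proof -
  have closed: "\<And>n. closed (Xs n)" using assms(1) by blast
  have nonempty: "\<And>n. Xs n \<noteq> {}" using PK_converges_nonempty[OF assms(3,2)] .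
  have "closed X" by (rule closed_PK_limit[OF closed assms(2,3)])
  from PK_converges_homeomorphism_image[OF homeomorphism_prod_shear
      PK_converges_graph_subgradients_asplund[OF closed assms(2,3)]]
  show ?thesis
    unfolding graph_converges_def graph_clarke_subdiff_sq_infdist[OF closed nonempty]
      graph_clarke_subdiff_sq_infdist[OF \<open>closed X\<close> assms(2)] .
qed

end
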